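(* Let $(X,T)$ be a topological dynamical system, $f\in C(X,\mathbb{R})$, and $(K_n)_{n\ge1}$ a sequence of nonempty closed subsets of $X$. Then $$\lim_{\delta\to0}\limsup_{n\to+\infty}\frac1n\log P_n(T,f,\delta,K_n)=\sup_{\mathcal{U}\in\mathcal{C}_X^o}\limsup_{n\to+\infty}\frac1n\log P_n(T,f,\mathcal{U},K_n).$$
   Context: A TDS is a compact metric space $(X,d)$ with a homeomorphism $T$. $f_n=\sum_{i=0}^{n-1}f\circ T^i$, $d_n(x,y)=\max_{0\le i<n}d(T^ix,T^iy)$, and $P_n(T,f,\delta,K)=\sup\{\sum_{x\in E}\exp f_n(x): E\subseteq K,\ d_n(x,y)>\delta\text{ for distinct }x,y\in E\}$. $\mathcal{C}_X$ is the set of finite Borel covers of $X$, $\mathcal{C}_X^o$ the set of finite open covers; $\mathcal{V}\succeq\mathcal{U}$ means each element of $\mathcal{V}$ lies in some element of $\mathcal{U}$; $\mathcal{U}_0^{n-1}=\bigvee_{i=0}^{n-1}T^{-i}\mathcal{U}$. $P_n(T,f,\mathcal{U},K)=\inf\{\sum_{V\in\mathcal{V}}\sup_{x\in V\cap K}\exp f_n(x):\mathcal{V}\in\mathcal{C}_X,\ \mathcal{V}\succeq\mathcal{U}_0^{n-1}\}$, terms with $V\cap K=\emptyset$ contributing $0$. *)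

theory Defs
  imports "HOL-Analysis.Analysis"
begin

definition birkhoff_sum :: "('a \<Rightarrow> 'a) \<Rightarrow> ('a \<Rightarrow> real) \<Rightarrow> nat \<Rightarrow> 'a \<Rightarrow> real" where
  "birkhoff_sum T f n x = (\<Sum>i<n. f ((T ^^ i) x))"

text \<open>Bowen metric d_n(x,y) = max_{0<=i<n} d(T^i x, T^i y) (relevant for n >= 1).\<close>
definition bowen_dist :: "('a::metric_space \<Rightarrow> 'a) \<Rightarrow> nat \<Rightarrow> 'a \<Rightarrow> 'a \<Rightarrow> real" where
  "bowen_dist T n x y = Max ((\<lambda>i. dist ((T ^^ i) x) ((T ^^ i) y)) ` {..<n})"

definition sep_pressure ::
  "('a::metric_space \<Rightarrow> 'a) \<Rightarrow> ('a \<Rightarrow> real) \<Rightarrow> nat \<Rightarrow> real \<Rightarrow> 'a set \<Rightarrow> real" where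
  "sep_pressure T f n \<delta> K =
     Sup {(\<Sum>x\<in>E. exp (birkhoff_sum T f n x)) | E.
            finite E \<and> E \<subseteq> K \<and>
            (\<forall>x\<in>E. \<forall>y\<in>E. x \<noteq> y \<longrightarrow> bowen_dist T n x y > \<delta>)}"

definition borel_covers :: "'a::topological_space set \<Rightarrow> 'a set set set" where
  "borel_covers X = {\<V>. finite \<V> \<and> (\<forall>V\<in>\<V>. V \<in> sets borel \<and> V \<subseteq> X) \<and> \<Union>\<V> = X}"

definition open_covers :: "'a::topological_space set \<Rightarrow> 'a set set set" where
  "open_covers X = {\<U>. finite \<U> \<and> (\<forall>U\<in>\<U>. openin (top_of_set X) U) \<and> \<Union>\<U> = X}"

definition refines :: "'a set set \<Rightarrow> 'a set set \<Rightarrow> bool" where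
  "refines \<V> \<U> \<longleftrightarrow> (\<forall>V\<in>\<V>. \<exists>U\<in>\<U>. V \<subseteq> U)"

definition join_cover :: "'a set \<Rightarrow> ('a \<Rightarrow> 'a) \<Rightarrow> 'a set set \<Rightarrow> nat \<Rightarrow> 'a set set" where
  "join_cover X T \<U> n = {X \<inter> (\<Inter>i<n. (T ^^ i) -` W i) | W. \<forall>i<n. W i \<in> \<U>}"

definition cover_pressure ::
  "'a::topological_space set \<Rightarrow> ('a \<Rightarrow> 'a) \<Rightarrow> ('a \<Rightarrow> real) \<Rightarrow> nat \<Rightarrow> 'a set set \<Rightarrow> 'a set \<Rightarrow> real" where
  "cover_pressure X T f n \<U> K =
     Inf {(\<Sum>V\<in>\<V>. (if V \<inter> K = {} then 0
                     else Sup ((\<lambda>x. exp (birkhoff_sum T f n x)) ` (V \<inter> K)))) | \<V>.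
            \<V> \<in> borel_covers X \<and> refines \<V> (join_cover X T \<U> n)}"

end

theory Submission
  imports Defs
begin

text \<open>
  If all members of \<open>\<U>\<close> have diameter at most
  \<open>\<delta>\<close>, distinct points of an \<open>(n,\<delta>)\<close>-separated set never lie in a common member of a refinement
  of the \<open>n\<close>-fold join of \<open>\<U>\<close>, so \<open>P_n(\<delta>) \<le> P_n(\<U>)\<close>. Conversely, if \<open>2\<delta>\<close> is below a Lebesgue
  number of \<open>\<U>\<close> and \<open>f\<close> oscillates by at most \<open>\<epsilon>\<close> at scale \<open>\<delta>\<close>, then the closed Bowen balls of
  radius \<open>\<delta>\<close> around a maximal separated subset of \<open>K\<close>, together with the sets \<open>J - K\<close> for \<open>J\<close> in
  the join (which carry no weight), form a Borel refinement of the join; hence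
  \<open>P_n(\<U>) \<le> exp (n \<epsilon>) P_n(\<delta>)\<close>. So the supremum over \<open>\<delta>\<close> of the growth rates of \<open>P_n(\<delta>)\<close> equals
  the supremum over \<open>\<U>\<close> of those of \<open>P_n(\<U>)\<close>; as the former rate is antitone in \<open>\<delta>\<close>, that
  supremum is its limit as \<open>\<delta> \<rightarrow> 0\<close>.
\<close>

section \<open>Limits and suprema\<close>

lemma diameter_le_dist_bound:
  fixes S :: "'a::metric_space set"
  assumes "0 \<le> d" and "\<And>x y. x \<in> S \<Longrightarrow> y \<in> S \<Longrightarrow> dist x y \<le> d"
  shows "diameter S \<le> d"
proof (cases "S = {}")
  case False
  then show ?thesis
    using assms by (auto simp: diameter_def intro: cSUP_least)
qed (simp add: assms)

lemma openin_closed_imp_borel: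
  assumes "closed X" and "openin (top_of_set X) W"
  shows "W \<in> sets borel"
proof -
  obtain V where "open V" "W = X \<inter> V"
    using assms(2) openin_open by blast
  then show ?thesis
    using assms(1) by (auto intro: borel_closed borel_open)
qed

lemma limsup_ln_rate_le:
  fixes a b :: "nat \<Rightarrow> real"
  assumes pos: "\<And>n. n \<ge> 1 \<Longrightarrow> 0 < a n"
    and le: "\<And>n. n \<ge> 1 \<Longrightarrow> a n \<le> exp (real n * c) * b n"
  shows "limsup (\<lambda>n. ereal (ln (a n) / real n))
           \<le> limsup (\<lambda>n. ereal (ln (b n) / real n)) + ereal c"
proof -
  have "limsup (\<lambda>n. ereal (ln (a n) / real n))
          \<le> limsup (\<lambda>n. ereal (ln (b n) / real n) + ereal c)"
  proof (rule Limsup_mono, unfold eventually_sequentially, intro exI allI impI)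
    fix n :: nat assume n: "1 \<le> n"
    have "0 < exp (real n * c) * b n"
      using pos[OF n] le[OF n] by linarith
    then have "0 < b n"
      by (simp add: zero_less_mult_iff)
    have "ln (a n) \<le> ln (exp (real n * c) * b n)"
      using pos[OF n] le[OF n] by simp
    also have "\<dots> = real n * c + ln (b n)"
      using \<open>0 < b n\<close> by (simp add: ln_mult)
    finally have "ln (a n) \<le> real n * c + ln (b n)" .
    then have "ln (a n) / real n \<le> ln (b n) / real n + c"
      using n by (simp add: field_simps)
    then show "ereal (ln (a n) / real n) \<le> ereal (ln (b n) / real n) + ereal c"
      by simp
  qed
  also have "\<dots> = limsup (\<lambda>n. ereal (ln (b n) / real n)) + ereal c"
    by (rule Limsup_add_ereal_right) simp_all
  finally show ?thesis .
qed

lemma SUP_eq_ereal_by_approximation: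
  fixes L :: "'i \<Rightarrow> ereal" and A :: "'j \<Rightarrow> ereal"
  assumes "\<And>i. i \<in> I \<Longrightarrow> \<exists>j\<in>J. L i \<le> A j"
    and "\<And>j e. j \<in> J \<Longrightarrow> 0 < e \<Longrightarrow> \<exists>i\<in>I. A j \<le> L i + ereal e"
  shows "(SUP i\<in>I. L i) = (SUP j\<in>J. A j)"
proof (rule antisym)
  show "(SUP i\<in>I. L i) \<le> (SUP j\<in>J. A j)"
  proof (rule SUP_least)
    fix i assume "i \<in> I"
    then obtain j where "j \<in> J" "L i \<le> A j"
      using assms(1) by blast
    from \<open>L i \<le> A j\<close> show "L i \<le> (SUP j\<in>J. A j)"
      using \<open>j \<in> J\<close> by (rule order_trans[OF _ SUP_upper])
  qed
  show "(SUP j\<in>J. A j) \<le> (SUP i\<in>I. L i)"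
  proof (rule SUP_least)
    fix j assume "j \<in> J"
    show "A j \<le> (SUP i\<in>I. L i)"
    proof (rule ereal_le_epsilon2)
      fix e :: real assume "0 < e"
      then obtain i where "i \<in> I" "A j \<le> L i + ereal e"
        using assms(2) \<open>j \<in> J\<close> by blast
      from \<open>i \<in> I\<close> have "L i + ereal e \<le> (SUP i\<in>I. L i) + ereal e"
        by (intro add_right_mono SUP_upper)
      with \<open>A j \<le> L i + ereal e\<close> show "A j \<le> (SUP i\<in>I. L i) + ereal e"
        by (rule order_trans)
    qed
  qed
qed

lemma antimono_tendsto_at_right_0_SUP:
  fixes L :: "real \<Rightarrow> 'b::{complete_linorder, linorder_topology}"
  assumes antimono: "\<And>a b. 0 < a \<Longrightarrow> a \<le> b \<Longrightarrow> L b \<le> L a"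
  shows "(L \<longlongrightarrow> (SUP \<delta>\<in>{0<..}. L \<delta>)) (at_right 0)"
proof (rule order_tendstoI)
  fix y assume "y < (SUP \<delta>\<in>{0<..}. L \<delta>)"
  then obtain \<delta>\<^sub>0 where "0 < \<delta>\<^sub>0" "y < L \<delta>\<^sub>0"
    unfolding less_SUP_iff by auto
  then show "\<forall>\<^sub>F \<delta> in at_right 0. y < L \<delta>"
    unfolding eventually_at_right_field
  proof (intro exI conjI allI impI)
    fix \<delta> :: real assume "0 < \<delta>" "\<delta> < \<delta>\<^sub>0"
    then show "y < L \<delta>"
      using antimono[of \<delta> \<delta>\<^sub>0] \<open>y < L \<delta>\<^sub>0\<close> by simp
  qed simp
next
  fix y assume "(SUP \<delta>\<in>{0<..}. L \<delta>) < y"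
  show "\<forall>\<^sub>F \<delta> in at_right 0. L \<delta> < y"
    using eventually_at_right_less
  proof (rule eventually_mono)
    fix \<delta> :: real assume "0 < \<delta>"
    then have "L \<delta> \<le> (SUP \<delta>\<in>{0<..}. L \<delta>)"
      by (intro SUP_upper) simp
    then show "L \<delta> < y"
      using \<open>(SUP \<delta>\<in>{0<..}. L \<delta>) < y\<close> by simp
  qed
qed

section \<open>Bowen distance and separated sets\<close>

definition bowen_separated :: "('a::metric_space \<Rightarrow> 'a) \<Rightarrow> nat \<Rightarrow> real \<Rightarrow> 'a set \<Rightarrow> bool" where
  "bowen_separated T n \<delta> E \<longleftrightarrow> (\<forall>x\<in>E. \<forall>y\<in>E. x \<noteq> y \<longrightarrow> \<delta> < bowen_dist T n x y)"

lemma sep_pressure_eq_Sup_separated: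
  "sep_pressure T f n \<delta> K =
     Sup {(\<Sum>x\<in>E. exp (birkhoff_sum T f n x)) | E. finite E \<and> E \<subseteq> K \<and> bowen_separated T n \<delta> E}"
  unfolding sep_pressure_def bowen_separated_def ..

lemma bowen_separated_mono:
  "bowen_separated T n \<delta>\<^sub>2 E \<Longrightarrow> \<delta>\<^sub>1 \<le> \<delta>\<^sub>2 \<Longrightarrow> bowen_separated T n \<delta>\<^sub>1 E"
  unfolding bowen_separated_def by (meson le_less_trans)

lemma bowen_dist_le_iff:
  assumes "1 \<le> n"
  shows "bowen_dist T n x y \<le> \<delta> \<longleftrightarrow> (\<forall>i<n. dist ((T ^^ i) x) ((T ^^ i) y) \<le> \<delta>)"
proof -
  have "0 \<in> {..<n}"
    using assms by simp
  then have "{..<n} \<noteq> {}"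
    by blast
  then show ?thesis
    unfolding bowen_dist_def by (subst Max_le_iff) auto
qed

lemma bowen_dist_commute: "bowen_dist T n x y = bowen_dist T n y x"
  unfolding bowen_dist_def by (simp add: dist_commute)

lemma bowen_separated_insert:
  assumes "bowen_separated T n \<delta> E" and "\<forall>x\<in>E. \<delta> < bowen_dist T n x y"
  shows "bowen_separated T n \<delta> (insert y E)"
  unfolding bowen_separated_def
proof (intro ballI impI)
  fix a b assume "a \<in> insert y E" "b \<in> insert y E" "a \<noteq> b"
  then consider "a \<in> E" "b \<in> E" | "a = y" "b \<in> E" | "a \<in> E" "b = y"
    by auto
  then show "\<delta> < bowen_dist T n a b"
  proof cases
    case 1
    then show ?thesis using assms(1) \<open>a \<noteq> b\<close> unfolding bowen_separated_def by blast
  next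
    case 2
    then show ?thesis using assms(2) bowen_dist_commute[of T n a b] by simp
  next
    case 3
    then show ?thesis using assms(2) by simp
  qed
qed

lemma join_cover_bowen_dist_le:
  assumes "1 \<le> n" and small: "\<forall>W\<in>\<U>. \<forall>y\<in>W. \<forall>z\<in>W. dist y z \<le> \<delta>"
    and "J \<in> join_cover X T \<U> n" and "y \<in> J" and "z \<in> J"
  shows "bowen_dist T n y z \<le> \<delta>"
proof -
  obtain W where W: "\<forall>i<n. W i \<in> \<U>" and J: "J = X \<inter> (\<Inter>i<n. (T ^^ i) -` W i)"
    using assms(3) unfolding join_cover_def by blast
  have "dist ((T ^^ i) y) ((T ^^ i) z) \<le> \<delta>" if "i < n" for i
  proof -
    have "(T ^^ i) y \<in> W i" "(T ^^ i) z \<in> W i"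
      using that assms(4,5) unfolding J by auto
    then show ?thesis
      using small W that by blast
  qed
  then show ?thesis
    unfolding bowen_dist_le_iff[OF assms(1)] by blast
qed

section \<open>Orbits and joins of open covers\<close>

locale tds =
  fixes X :: "'a::metric_space set" and T :: "'a \<Rightarrow> 'a" and f :: "'a \<Rightarrow> real"
  assumes compact_X: "compact X"
    and T_in_X: "\<And>x. x \<in> X \<Longrightarrow> T x \<in> X"
    and continuous_T: "continuous_on X T"
    and continuous_f: "continuous_on X f"
begin

lemma funpow_in_X: "x \<in> X \<Longrightarrow> (T ^^ i) x \<in> X"
  by (induction i) (auto intro: T_in_X)

lemma continuous_on_funpow: "continuous_on X (T ^^ i)"
proof (induction i)
  case (Suc i)
  have "continuous_on X (T ^^ i \<circ> T)"
    using continuous_T continuous_on_subset[OF Suc, of "T ` X"] T_in_X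
    by (intro continuous_on_compose) auto
  then show ?case
    by (simp only: funpow_Suc_right)
qed simp

lemma openin_preimage_funpow:
  "openin (top_of_set X) W \<Longrightarrow> openin (top_of_set X) (X \<inter> (T ^^ i) -` W)"
  using continuous_openin_preimage[OF continuous_on_funpow] funpow_in_X by blast

lemma birkhoff_sum_le_linear:
  obtains M where "\<And>x n. x \<in> X \<Longrightarrow> birkhoff_sum T f n x \<le> real n * M"
proof -
  have "bounded (f ` X)"
    by (intro compact_imp_bounded compact_continuous_image continuous_f compact_X)
  then obtain M where "\<forall>y\<in>f ` X. \<bar>y\<bar> \<le> M"
    unfolding bounded_real by blast
  then have M: "\<And>x. x \<in> X \<Longrightarrow> f x \<le> M"
    by force
  have "birkhoff_sum T f n x \<le> real n * M" if "x \<in> X" for x n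
    unfolding birkhoff_sum_def
    using sum_mono[of "{..<n}" "\<lambda>i. f ((T ^^ i) x)" "\<lambda>_. M"] M funpow_in_X[OF that] by simp
  then show ?thesis
    using that by blast
qed

lemma birkhoff_sum_le_of_orbits_close:
  assumes "x \<in> X" "y \<in> X" and close: "\<forall>i<n. dist ((T ^^ i) x) ((T ^^ i) y) \<le> \<delta>"
    and uc: "\<And>u v. u \<in> X \<Longrightarrow> v \<in> X \<Longrightarrow> dist u v \<le> \<delta> \<Longrightarrow> \<bar>f u - f v\<bar> \<le> \<epsilon>"
  shows "birkhoff_sum T f n y \<le> real n * \<epsilon> + birkhoff_sum T f n x"
proof -
  have "birkhoff_sum T f n y - birkhoff_sum T f n x = (\<Sum>i<n. f ((T ^^ i) y) - f ((T ^^ i) x))"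
    unfolding birkhoff_sum_def by (simp add: sum_subtractf)
  also have "\<dots> \<le> (\<Sum>i<n. \<epsilon>)"
  proof (rule sum_mono)
    fix i assume "i \<in> {..<n}"
    then have "\<bar>f ((T ^^ i) y) - f ((T ^^ i) x)\<bar> \<le> \<epsilon>"
      using uc funpow_in_X assms(1,2) close by (simp add: dist_commute)
    then show "f ((T ^^ i) y) - f ((T ^^ i) x) \<le> \<epsilon>"
      by linarith
  qed
  finally show ?thesis
    by simp
qed

lemma join_cover_openin:
  assumes "\<U> \<in> open_covers X" and "J \<in> join_cover X T \<U> n"
  shows "openin (top_of_set X) J"
proof -
  obtain W where W: "\<forall>i<n. W i \<in> \<U>" and J: "J = X \<inter> (\<Inter>i<n. (T ^^ i) -` W i)"
    using assms(2) unfolding join_cover_def by blast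
  have "J = (\<Inter>i<n. X \<inter> (T ^^ i) -` W i) \<inter> topspace (top_of_set X)"
    unfolding J by auto
  also have "openin (top_of_set X) \<dots>"
    using W assms(1) unfolding open_covers_def
    by (intro openin_INT openin_preimage_funpow) auto
  finally show ?thesis .
qed

lemma Union_join_cover:
  assumes "\<U> \<in> open_covers X"
  shows "\<Union>(join_cover X T \<U> n) = X"
proof (intro equalityI subsetI)
  fix x assume "x \<in> X"
  then have "\<forall>i. \<exists>W\<in>\<U>. (T ^^ i) x \<in> W"
    using assms funpow_in_X unfolding open_covers_def by blast
  then obtain W where W: "\<And>i. W i \<in> \<U> \<and> (T ^^ i) x \<in> W i"
    by metis
  then have "X \<inter> (\<Inter>i<n. (T ^^ i) -` W i) \<in> join_cover X T \<U> n"
    unfolding join_cover_def by blast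
  then show "x \<in> \<Union>(join_cover X T \<U> n)"
    using W \<open>x \<in> X\<close> by blast
qed (auto simp: join_cover_def)

lemma finite_join_cover:
  assumes "\<U> \<in> open_covers X"
  shows "finite (join_cover X T \<U> n)"
proof -
  have "join_cover X T \<U> n \<subseteq> (\<lambda>W. X \<inter> (\<Inter>i<n. (T ^^ i) -` W i)) ` (\<Pi>\<^sub>E i\<in>{..<n}. \<U>)"
  proof
    fix J assume "J \<in> join_cover X T \<U> n"
    then obtain W where "\<forall>i<n. W i \<in> \<U>" and "J = X \<inter> (\<Inter>i<n. (T ^^ i) -` W i)"
      unfolding join_cover_def by blast
    then have "restrict W {..<n} \<in> (\<Pi>\<^sub>E i\<in>{..<n}. \<U>)"
      and "J = X \<inter> (\<Inter>i<n. (T ^^ i) -` restrict W {..<n} i)"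
      by auto
    then show "J \<in> (\<lambda>W. X \<inter> (\<Inter>i<n. (T ^^ i) -` W i)) ` (\<Pi>\<^sub>E i\<in>{..<n}. \<U>)"
      by blast
  qed
  moreover have "finite (\<Pi>\<^sub>E i\<in>{..<n}. \<U>)"
    using assms unfolding open_covers_def by (intro finite_PiE) auto
  ultimately show ?thesis
    using finite_subset by blast
qed

lemma join_cover_in_borel_covers:
  assumes "\<U> \<in> open_covers X"
  shows "join_cover X T \<U> n \<in> borel_covers X"
proof -
  have "J \<in> sets borel \<and> J \<subseteq> X" if "J \<in> join_cover X T \<U> n" for J
    using join_cover_openin[OF assms that] openin_imp_subset
      openin_closed_imp_borel[OF compact_imp_closed[OF compact_X]] by blast
  with finite_join_cover[OF assms] Union_join_cover[OF assms] show ?thesis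
    unfolding borel_covers_def by blast
qed

lemma exists_fine_open_cover:
  assumes "0 < \<delta>"
  shows "\<exists>\<U>\<in>open_covers X. \<forall>W\<in>\<U>. \<forall>y\<in>W. \<forall>z\<in>W. dist y z \<le> \<delta>"
proof -
  have "X \<subseteq> (\<Union>x\<in>X. ball x (\<delta>/2))"
    using assms by auto
  then obtain D where D: "D \<subseteq> X" "finite D" "X \<subseteq> (\<Union>x\<in>D. ball x (\<delta>/2))"
    using compactE_image[OF compact_X, of X "\<lambda>x. ball x (\<delta>/2)"] by auto
  define \<U> where "\<U> = (\<lambda>x. X \<inter> ball x (\<delta>/2)) ` D"
  have "\<U> \<in> open_covers X"
    unfolding open_covers_def \<U>_def using D by auto
  moreover have "dist y z \<le> \<delta>" if "W \<in> \<U>" "y \<in> W" "z \<in> W" for W y z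
  proof -
    from that obtain x where "y \<in> ball x (\<delta>/2)" "z \<in> ball x (\<delta>/2)"
      unfolding \<U>_def by blast
    then show ?thesis
      using dist_triangle[of y z x] by (simp add: dist_commute)
  qed
  ultimately show ?thesis
    by blast
qed

lemma open_cover_Lebesgue_number:
  assumes "\<U> \<in> open_covers X" and "X \<noteq> {}"
  obtains r where "0 < r" and "\<And>S. S \<subseteq> X \<Longrightarrow> diameter S < r \<Longrightarrow> \<exists>W\<in>\<U>. S \<subseteq> W"
proof -
  have "\<forall>W\<in>\<U>. \<exists>V. open V \<and> W = X \<inter> V"
    using assms(1) unfolding open_covers_def openin_open by blast
  then obtain V where V: "\<And>W. W \<in> \<U> \<Longrightarrow> open (V W) \<and> W = X \<inter> V W"
    by metis
  have ne: "V ` \<U> \<noteq> {}" and cover: "X \<subseteq> \<Union>(V ` \<U>)"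
    and opens: "\<And>B. B \<in> V ` \<U> \<Longrightarrow> open B"
    using assms V unfolding open_covers_def by auto
  show ?thesis
  proof (rule Lebesgue_number_lemma[OF compact_X ne cover opens])
    fix r assume "0 < r" and r: "\<And>S. S \<subseteq> X \<Longrightarrow> diameter S < r \<Longrightarrow> \<exists>B\<in>V ` \<U>. S \<subseteq> B"
    have "\<exists>W\<in>\<U>. S \<subseteq> W" if "S \<subseteq> X" "diameter S < r" for S
      using r[OF that] V that(1) by blast
    with \<open>0 < r\<close> show thesis
      using that by blast
  qed
qed

section \<open>The two pressures\<close>

lemma card_bowen_separated_le_card_join_cover:
  assumes "\<U> \<in> open_covers X" and small: "\<forall>W\<in>\<U>. \<forall>y\<in>W. \<forall>z\<in>W. dist y z \<le> \<delta>"
    and "1 \<le> n" and "E \<subseteq> X" and sep: "bowen_separated T n \<delta> E"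
  shows "card E \<le> card (join_cover X T \<U> n)"
proof -
  have "\<forall>x\<in>E. \<exists>J\<in>join_cover X T \<U> n. x \<in> J"
    using Union_join_cover[OF assms(1)] assms(4) by blast
  then obtain J where J: "\<And>x. x \<in> E \<Longrightarrow> J x \<in> join_cover X T \<U> n \<and> x \<in> J x"
    by metis
  have "inj_on J E"
  proof (rule inj_onI, rule ccontr)
    fix x y assume "x \<in> E" "y \<in> E" "J x = J y" "x \<noteq> y"
    then have "bowen_dist T n x y \<le> \<delta>"
      using join_cover_bowen_dist_le[OF assms(3) small] J by metis
    then show False
      using sep \<open>x \<in> E\<close> \<open>y \<in> E\<close> \<open>x \<noteq> y\<close> unfolding bowen_separated_def by force
  qed
  then show ?thesis
    using J finite_join_cover[OF assms(1)] by (intro card_inj_on_le) auto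
qed

lemma bdd_above_separated_sums:
  assumes "0 < \<delta>" and "1 \<le> n" and "K \<subseteq> X"
  shows "bdd_above {(\<Sum>x\<in>E. exp (birkhoff_sum T f n x)) | E.
                      finite E \<and> E \<subseteq> K \<and> bowen_separated T n \<delta> E}"
proof -
  obtain \<U> where \<U>: "\<U> \<in> open_covers X" "\<forall>W\<in>\<U>. \<forall>y\<in>W. \<forall>z\<in>W. dist y z \<le> \<delta>"
    using exists_fine_open_cover[OF assms(1)] by blast
  obtain M where M: "\<And>x n. x \<in> X \<Longrightarrow> birkhoff_sum T f n x \<le> real n * M"
    using birkhoff_sum_le_linear by blast
  define N where "N = card (join_cover X T \<U> n)"
  have "(\<Sum>x\<in>E. exp (birkhoff_sum T f n x)) \<le> real N * exp (real n * M)"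
    if "E \<subseteq> K" "bowen_separated T n \<delta> E" for E
  proof -
    have "(\<Sum>x\<in>E. exp (birkhoff_sum T f n x)) \<le> (\<Sum>x\<in>E. exp (real n * M))"
      using M that(1) assms(3) by (intro sum_mono) auto
    also have "\<dots> = real (card E) * exp (real n * M)"
      by simp
    also have "\<dots> \<le> real N * exp (real n * M)"
      using card_bowen_separated_le_card_join_cover[OF \<U> assms(2) _ that(2)] that(1) assms(3)
      unfolding N_def by (intro mult_right_mono) auto
    finally show ?thesis .
  qed
  then show ?thesis
    by (intro bdd_aboveI) blast
qed

lemma sum_le_sep_pressure:
  assumes "0 < \<delta>" and "1 \<le> n" and "K \<subseteq> X"
    and "finite E" and "E \<subseteq> K" and "bowen_separated T n \<delta> E"
  shows "(\<Sum>x\<in>E. exp (birkhoff_sum T f n x)) \<le> sep_pressure T f n \<delta> K"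
  unfolding sep_pressure_eq_Sup_separated
  using assms by (intro cSup_upper bdd_above_separated_sums) auto

lemma sep_pressure_pos:
  assumes "0 < \<delta>" and "1 \<le> n" and "K \<subseteq> X" and "K \<noteq> {}"
  shows "0 < sep_pressure T f n \<delta> K"
proof -
  obtain x where "x \<in> K"
    using assms(4) by blast
  have "0 < (\<Sum>y\<in>{x}. exp (birkhoff_sum T f n y))"
    by simp
  also have "\<dots> \<le> sep_pressure T f n \<delta> K"
    using \<open>x \<in> K\<close> by (intro sum_le_sep_pressure[OF assms(1-3)]) (auto simp: bowen_separated_def)
  finally show ?thesis .
qed

lemma sep_pressure_antimono:
  assumes "0 < \<delta>\<^sub>1" and "\<delta>\<^sub>1 \<le> \<delta>\<^sub>2" and "1 \<le> n" and "K \<subseteq> X"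
  shows "sep_pressure T f n \<delta>\<^sub>2 K \<le> sep_pressure T f n \<delta>\<^sub>1 K"
  unfolding sep_pressure_eq_Sup_separated[of T f n \<delta>\<^sub>2]
proof (rule cSup_least)
  show "{(\<Sum>x\<in>E. exp (birkhoff_sum T f n x)) | E. finite E \<and> E \<subseteq> K \<and> bowen_separated T n \<delta>\<^sub>2 E} \<noteq> {}"
    by (auto intro!: exI[of _ "{}"] simp: bowen_separated_def)
qed (use assms bowen_separated_mono sum_le_sep_pressure in blast)

text \<open>Separated sets have bounded cardinality, so a maximal one exists; maximality makes it spanning.\<close>
lemma exists_spanning_separated_set:
  assumes "0 < \<delta>" and "1 \<le> n" and "K \<subseteq> X"
  obtains E where "finite E" "E \<subseteq> K" "bowen_separated T n \<delta> E"
    and "\<And>y. y \<in> K \<Longrightarrow> \<exists>x\<in>E. bowen_dist T n x y \<le> \<delta>"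
proof -
  obtain \<U> where \<U>: "\<U> \<in> open_covers X" "\<forall>W\<in>\<U>. \<forall>y\<in>W. \<forall>z\<in>W. dist y z \<le> \<delta>"
    using exists_fine_open_cover[OF assms(1)] by blast
  define P where "P E \<longleftrightarrow> finite E \<and> E \<subseteq> K \<and> bowen_separated T n \<delta> E" for E
  have "P {}"
    by (simp add: P_def bowen_separated_def)
  moreover have "\<forall>E. P E \<longrightarrow> card E < Suc (card (join_cover X T \<U> n))"
    using card_bowen_separated_le_card_join_cover[OF \<U> assms(2)] assms(3)
    unfolding P_def by (meson le_imp_less_Suc order_trans)
  ultimately obtain E where E: "P E" and max: "\<And>E'. P E' \<Longrightarrow> card E' \<le> card E"
    using ex_has_greatest_nat[of P "{}" card] by blast
  have "\<exists>x\<in>E. bowen_dist T n x y \<le> \<delta>" if "y \<in> K" for y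
  proof (rule ccontr)
    assume "\<not> (\<exists>x\<in>E. bowen_dist T n x y \<le> \<delta>)"
    then have far: "\<forall>x\<in>E. \<delta> < bowen_dist T n x y"
      by auto
    then have "y \<notin> E"
      using bowen_dist_le_iff[OF assms(2), of T y y \<delta>] assms(1) by auto
    have "P (insert y E)"
      using E far that unfolding P_def by (auto intro: bowen_separated_insert)
    then show False
      using max[of "insert y E"] \<open>y \<notin> E\<close> E unfolding P_def by simp
  qed
  then show ?thesis
    using that E unfolding P_def by blast
qed

definition sup_weight :: "nat \<Rightarrow> 'a set \<Rightarrow> 'a set \<Rightarrow> real" where
  "sup_weight n K V =
     (if V \<inter> K = {} then 0 else Sup ((\<lambda>x. exp (birkhoff_sum T f n x)) ` (V \<inter> K)))"

lemma cover_pressure_eq_Inf_sup_weight: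
  "cover_pressure X T f n \<U> K =
     Inf {sum (sup_weight n K) \<V> | \<V>. \<V> \<in> borel_covers X \<and> refines \<V> (join_cover X T \<U> n)}"
  unfolding cover_pressure_def sup_weight_def ..

lemma exp_birkhoff_sum_le_sup_weight:
  assumes "V \<subseteq> X" and "x \<in> V \<inter> K"
  shows "exp (birkhoff_sum T f n x) \<le> sup_weight n K V"
proof -
  obtain M where M: "\<And>x n. x \<in> X \<Longrightarrow> birkhoff_sum T f n x \<le> real n * M"
    using birkhoff_sum_le_linear by blast
  have "bdd_above ((\<lambda>x. exp (birkhoff_sum T f n x)) ` (V \<inter> K))"
    using M assms(1) by (intro bdd_aboveI2[of _ _ "exp (real n * M)"]) auto
  then show ?thesis
    using assms(2) unfolding sup_weight_def by (auto intro: cSup_upper)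
qed

lemma sup_weight_nonneg:
  assumes "V \<subseteq> X"
  shows "0 \<le> sup_weight n K V"
proof (cases "V \<inter> K = {}")
  case False
  then obtain x where "x \<in> V \<inter> K"
    by blast
  then show ?thesis
    using exp_birkhoff_sum_le_sup_weight[OF assms] exp_ge_zero order_trans by blast
qed (simp add: sup_weight_def)

lemma sup_weight_le:
  assumes "\<And>y. y \<in> V \<inter> K \<Longrightarrow> exp (birkhoff_sum T f n y) \<le> c" and "0 \<le> c"
  shows "sup_weight n K V \<le> c"
  using assms unfolding sup_weight_def by (auto intro: cSup_least)

lemma cover_pressure_le_sum:
  assumes "\<V> \<in> borel_covers X" and "refines \<V> (join_cover X T \<U> n)"
  shows "cover_pressure X T f n \<U> K \<le> sum (sup_weight n K) \<V>"
  unfolding cover_pressure_eq_Inf_sup_weight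
proof (rule cInf_lower)
  show "bdd_below {sum (sup_weight n K) \<V> | \<V>. \<V> \<in> borel_covers X \<and> refines \<V> (join_cover X T \<U> n)}"
    by (rule bdd_belowI[of _ 0])
      (auto simp: borel_covers_def intro!: sum_nonneg sup_weight_nonneg)
qed (use assms in blast)

lemma le_cover_pressure:
  assumes "\<U> \<in> open_covers X"
    and "\<And>\<V>. \<V> \<in> borel_covers X \<Longrightarrow> refines \<V> (join_cover X T \<U> n) \<Longrightarrow> c \<le> sum (sup_weight n K) \<V>"
  shows "c \<le> cover_pressure X T f n \<U> K"
  unfolding cover_pressure_eq_Inf_sup_weight
proof (rule cInf_greatest)
  show "{sum (sup_weight n K) \<V> | \<V>. \<V> \<in> borel_covers X \<and> refines \<V> (join_cover X T \<U> n)} \<noteq> {}"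
    using join_cover_in_borel_covers[OF assms(1)] by (auto simp: refines_def)
qed (use assms(2) in blast)

lemma cover_pressure_pos:
  assumes "\<U> \<in> open_covers X" and "K \<subseteq> X" and "K \<noteq> {}"
  shows "0 < cover_pressure X T f n \<U> K"
proof -
  obtain x where "x \<in> K"
    using assms(3) by blast
  have "exp (birkhoff_sum T f n x) \<le> cover_pressure X T f n \<U> K"
  proof (rule le_cover_pressure[OF assms(1)])
    fix \<V> assume "\<V> \<in> borel_covers X"
    then obtain V where "V \<in> \<V>" "x \<in> V" "finite \<V>" "\<forall>V\<in>\<V>. V \<subseteq> X"
      using \<open>x \<in> K\<close> assms(2) unfolding borel_covers_def by blast
    then have "exp (birkhoff_sum T f n x) \<le> sup_weight n K V"
      using \<open>x \<in> K\<close> by (intro exp_birkhoff_sum_le_sup_weight) auto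
    also have "\<dots> \<le> sum (sup_weight n K) \<V>"
      using \<open>V \<in> \<V>\<close> \<open>finite \<V>\<close> \<open>\<forall>V\<in>\<V>. V \<subseteq> X\<close>
      by (intro member_le_sum sup_weight_nonneg) auto
    finally show "exp (birkhoff_sum T f n x) \<le> sum (sup_weight n K) \<V>" .
  qed
  then show ?thesis
    using exp_gt_zero less_le_trans by blast
qed

lemma sep_pressure_le_cover_pressure:
  assumes \<U>: "\<U> \<in> open_covers X" and small: "\<forall>W\<in>\<U>. \<forall>y\<in>W. \<forall>z\<in>W. dist y z \<le> \<delta>"
    and n: "1 \<le> n" and K: "K \<subseteq> X"
  shows "sep_pressure T f n \<delta> K \<le> cover_pressure X T f n \<U> K"
  unfolding sep_pressure_eq_Sup_separated
proof (rule cSup_least)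
  show "{(\<Sum>x\<in>E. exp (birkhoff_sum T f n x)) | E. finite E \<and> E \<subseteq> K \<and> bowen_separated T n \<delta> E} \<noteq> {}"
    by (auto intro!: exI[of _ "{}"] simp: bowen_separated_def)
next
  fix s assume "s \<in> {(\<Sum>x\<in>E. exp (birkhoff_sum T f n x)) | E. finite E \<and> E \<subseteq> K \<and> bowen_separated T n \<delta> E}"
  then obtain E where s: "s = (\<Sum>x\<in>E. exp (birkhoff_sum T f n x))"
    and E: "finite E" "E \<subseteq> K" "bowen_separated T n \<delta> E"
    by blast
  show "s \<le> cover_pressure X T f n \<U> K"
  proof (rule le_cover_pressure[OF \<U>])
    fix \<V> assume \<V>: "\<V> \<in> borel_covers X" "refines \<V> (join_cover X T \<U> n)"
    then have "finite \<V>" and \<V>X: "\<forall>V\<in>\<V>. V \<subseteq> X" and "\<forall>x\<in>E. \<exists>V\<in>\<V>. x \<in> V"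
      using E(2) K unfolding borel_covers_def by auto
    then obtain V where V: "\<And>x. x \<in> E \<Longrightarrow> V x \<in> \<V> \<and> x \<in> V x"
      by metis
    have "inj_on V E"
    proof (rule inj_onI, rule ccontr)
      fix x y assume "x \<in> E" "y \<in> E" "V x = V y" "x \<noteq> y"
      moreover obtain J where "J \<in> join_cover X T \<U> n" "V x \<subseteq> J"
        using \<V>(2) V \<open>x \<in> E\<close> unfolding refines_def by blast
      ultimately have "bowen_dist T n x y \<le> \<delta>"
        using join_cover_bowen_dist_le[OF n small] V by (metis subsetD)
      then show False
        using E(3) \<open>x \<in> E\<close> \<open>y \<in> E\<close> \<open>x \<noteq> y\<close> unfolding bowen_separated_def by force
    qed
    have "s \<le> (\<Sum>x\<in>E. sup_weight n K (V x))"
      unfolding s using V E(2) \<V>X by (intro sum_mono exp_birkhoff_sum_le_sup_weight) auto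
    also have "\<dots> = sum (sup_weight n K) (V ` E)"
      by (simp add: sum.reindex[OF \<open>inj_on V E\<close>])
    also have "\<dots> \<le> sum (sup_weight n K) \<V>"
      using V \<open>finite \<V>\<close> \<V>X by (intro sum_mono2 sup_weight_nonneg) auto
    finally show "s \<le> sum (sup_weight n K) \<V>" .
  qed
qed

definition bowen_cball :: "nat \<Rightarrow> 'a \<Rightarrow> real \<Rightarrow> 'a set" where
  "bowen_cball n x \<delta> = {y \<in> X. \<forall>i<n. dist ((T ^^ i) x) ((T ^^ i) y) \<le> \<delta>}"

lemma closed_bowen_cball: "closed (bowen_cball n x \<delta>)"
proof -
  have "bowen_cball n x \<delta> = X \<inter> (\<Inter>i<n. X \<inter> (T ^^ i) -` cball ((T ^^ i) x) \<delta>)"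
    unfolding bowen_cball_def by auto
  also have "closed \<dots>"
    using compact_imp_closed[OF compact_X]
    by (intro closed_Int closed_INT ballI continuous_closed_preimage continuous_on_funpow closed_cball)
  finally show ?thesis .
qed

lemma bowen_cball_refines_join_cover:
  assumes "\<U> \<in> open_covers X"
    and Lebesgue: "\<And>S. S \<subseteq> X \<Longrightarrow> diameter S < r \<Longrightarrow> \<exists>W\<in>\<U>. S \<subseteq> W"
    and "0 \<le> \<delta>" and "2 * \<delta> < r"
  shows "\<exists>J\<in>join_cover X T \<U> n. bowen_cball n x \<delta> \<subseteq> J"
proof -
  have "\<exists>W\<in>\<U>. (T ^^ i) ` bowen_cball n x \<delta> \<subseteq> W" if "i < n" for i
  proof (rule Lebesgue)
    show "(T ^^ i) ` bowen_cball n x \<delta> \<subseteq> X"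
      using funpow_in_X unfolding bowen_cball_def by blast
    have "diameter ((T ^^ i) ` bowen_cball n x \<delta>) \<le> 2 * \<delta>"
    proof (rule diameter_le_dist_bound)
      fix a b assume "a \<in> (T ^^ i) ` bowen_cball n x \<delta>" "b \<in> (T ^^ i) ` bowen_cball n x \<delta>"
      then have "dist ((T ^^ i) x) a \<le> \<delta>" "dist ((T ^^ i) x) b \<le> \<delta>"
        using that unfolding bowen_cball_def by auto
      then show "dist a b \<le> 2 * \<delta>"
        using dist_triangle[of a b "(T ^^ i) x"] by (simp add: dist_commute)
    qed (use assms(3) in simp)
    then show "diameter ((T ^^ i) ` bowen_cball n x \<delta>) < r"
      using assms(4) by linarith
  qed
  then obtain W where W: "\<And>i. i < n \<Longrightarrow> W i \<in> \<U> \<and> (T ^^ i) ` bowen_cball n x \<delta> \<subseteq> W i"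
    by metis
  then have "X \<inter> (\<Inter>i<n. (T ^^ i) -` W i) \<in> join_cover X T \<U> n"
    unfolding join_cover_def by blast
  moreover have "bowen_cball n x \<delta> \<subseteq> X \<inter> (\<Inter>i<n. (T ^^ i) -` W i)"
    using W unfolding bowen_cball_def by blast
  ultimately show ?thesis
    by blast
qed

lemma sup_weight_bowen_cball_le:
  assumes "x \<in> X"
    and uc: "\<And>u v. u \<in> X \<Longrightarrow> v \<in> X \<Longrightarrow> dist u v \<le> \<delta> \<Longrightarrow> \<bar>f u - f v\<bar> \<le> \<epsilon>"
  shows "sup_weight n K (bowen_cball n x \<delta>) \<le> exp (real n * \<epsilon>) * exp (birkhoff_sum T f n x)"
proof (rule sup_weight_le)
  fix y assume "y \<in> bowen_cball n x \<delta> \<inter> K"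
  then have "birkhoff_sum T f n y \<le> real n * \<epsilon> + birkhoff_sum T f n x"
    using assms unfolding bowen_cball_def by (intro birkhoff_sum_le_of_orbits_close) auto
  then show "exp (birkhoff_sum T f n y) \<le> exp (real n * \<epsilon>) * exp (birkhoff_sum T f n x)"
    by (simp flip: exp_add)
qed simp

lemma cover_pressure_le_sep_pressure:
  assumes \<U>: "\<U> \<in> open_covers X"
    and Lebesgue: "\<And>S. S \<subseteq> X \<Longrightarrow> diameter S < r \<Longrightarrow> \<exists>W\<in>\<U>. S \<subseteq> W"
    and "0 < \<delta>" and "2 * \<delta> < r"
    and uc: "\<And>u v. u \<in> X \<Longrightarrow> v \<in> X \<Longrightarrow> dist u v \<le> \<delta> \<Longrightarrow> \<bar>f u - f v\<bar> \<le> \<epsilon>"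
    and n: "1 \<le> n" and K: "K \<subseteq> X" "closed K"
  shows "cover_pressure X T f n \<U> K \<le> exp (real n * \<epsilon>) * sep_pressure T f n \<delta> K"
proof -
  obtain E where E: "finite E" "E \<subseteq> K" "bowen_separated T n \<delta> E"
    and spanning: "\<And>y. y \<in> K \<Longrightarrow> \<exists>x\<in>E. bowen_dist T n x y \<le> \<delta>"
    using exists_spanning_separated_set[OF \<open>0 < \<delta>\<close> n K(1)] by blast
  define \<B> where "\<B> = (\<lambda>x. bowen_cball n x \<delta>) ` E"
  define \<V> where "\<V> = \<B> \<union> (\<lambda>J. J - K) ` join_cover X T \<U> n"
  have "finite \<V>"
    unfolding \<V>_def \<B>_def using E(1) finite_join_cover[OF \<U>] by blast
  have \<V>X: "\<forall>V\<in>\<V>. V \<subseteq> X"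
    unfolding \<V>_def \<B>_def bowen_cball_def using Union_join_cover[OF \<U>, of n] by blast
  have "X \<subseteq> \<Union>\<V>"
  proof
    fix y assume "y \<in> X"
    show "y \<in> \<Union>\<V>"
    proof (cases "y \<in> K")
      case True
      then obtain x where "x \<in> E" "bowen_dist T n x y \<le> \<delta>"
        using spanning by blast
      then show ?thesis
        using \<open>y \<in> X\<close> unfolding \<V>_def \<B>_def bowen_cball_def bowen_dist_le_iff[OF n] by blast
    next
      case False
      then show ?thesis
        using \<open>y \<in> X\<close> Union_join_cover[OF \<U>, of n] unfolding \<V>_def by blast
    qed
  qed
  moreover have "\<forall>V\<in>\<V>. V \<in> sets borel"
    using closed_bowen_cball join_cover_in_borel_covers[OF \<U>, of n] K(2)
    unfolding \<V>_def \<B>_def borel_covers_def by (auto intro: borel_closed)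
  ultimately have "\<V> \<in> borel_covers X"
    using \<open>finite \<V>\<close> \<V>X unfolding borel_covers_def by blast
  moreover have "refines \<V> (join_cover X T \<U> n)"
    using bowen_cball_refines_join_cover[OF \<U> Lebesgue] \<open>0 < \<delta>\<close> \<open>2 * \<delta> < r\<close>
    unfolding refines_def \<V>_def \<B>_def by fastforce
  ultimately have "cover_pressure X T f n \<U> K \<le> sum (sup_weight n K) \<V>"
    by (rule cover_pressure_le_sum)
  also have "\<dots> = sum (sup_weight n K) \<B>"
    using \<open>finite \<V>\<close> by (intro sum.mono_neutral_right) (auto simp: \<V>_def sup_weight_def)
  also have "\<dots> \<le> (\<Sum>x\<in>E. sup_weight n K (bowen_cball n x \<delta>))"
    unfolding \<B>_def using E(1) \<V>X
    by (intro sum_image_le[unfolded o_def] sup_weight_nonneg) (auto simp: \<V>_def \<B>_def)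
  also have "\<dots> \<le> (\<Sum>x\<in>E. exp (real n * \<epsilon>) * exp (birkhoff_sum T f n x))"
    using E(2) K(1) by (intro sum_mono sup_weight_bowen_cball_le uc) auto
  also have "\<dots> = exp (real n * \<epsilon>) * (\<Sum>x\<in>E. exp (birkhoff_sum T f n x))"
    by (simp add: sum_distrib_left)
  also have "\<dots> \<le> exp (real n * \<epsilon>) * sep_pressure T f n \<delta> K"
    using sum_le_sep_pressure[OF \<open>0 < \<delta>\<close> n K(1) E] by simp
  finally show ?thesis .
qed

section \<open>Growth rates\<close>

definition sep_growth_rate :: "(nat \<Rightarrow> 'a set) \<Rightarrow> real \<Rightarrow> ereal" where
  "sep_growth_rate K \<delta> = limsup (\<lambda>n. ereal (ln (sep_pressure T f n \<delta> (K n)) / real n))"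

definition cover_growth_rate :: "(nat \<Rightarrow> 'a set) \<Rightarrow> 'a set set \<Rightarrow> ereal" where
  "cover_growth_rate K \<U> = limsup (\<lambda>n. ereal (ln (cover_pressure X T f n \<U> (K n)) / real n))"

lemma sep_growth_rate_antimono:
  assumes "\<And>n. 1 \<le> n \<Longrightarrow> K n \<subseteq> X" "\<And>n. 1 \<le> n \<Longrightarrow> K n \<noteq> {}"
    and "0 < \<delta>\<^sub>1" and "\<delta>\<^sub>1 \<le> \<delta>\<^sub>2"
  shows "sep_growth_rate K \<delta>\<^sub>2 \<le> sep_growth_rate K \<delta>\<^sub>1"
proof -
  have "sep_growth_rate K \<delta>\<^sub>2 \<le> sep_growth_rate K \<delta>\<^sub>1 + ereal 0"
    unfolding sep_growth_rate_def
  proof (rule limsup_ln_rate_le)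
    fix n :: nat assume "1 \<le> n"
    then show "0 < sep_pressure T f n \<delta>\<^sub>2 (K n)"
      using assms by (intro sep_pressure_pos) auto
    show "sep_pressure T f n \<delta>\<^sub>2 (K n) \<le> exp (real n * 0) * sep_pressure T f n \<delta>\<^sub>1 (K n)"
      using assms \<open>1 \<le> n\<close> by (simp add: sep_pressure_antimono)
  qed
  then show ?thesis
    by simp
qed

lemma sep_growth_rate_le_cover_growth_rate:
  assumes "\<And>n. 1 \<le> n \<Longrightarrow> K n \<subseteq> X" "\<And>n. 1 \<le> n \<Longrightarrow> K n \<noteq> {}" and "0 < \<delta>"
  shows "\<exists>\<U>\<in>open_covers X. sep_growth_rate K \<delta> \<le> cover_growth_rate K \<U>"
proof -
  obtain \<U> where \<U>: "\<U> \<in> open_covers X" "\<forall>W\<in>\<U>. \<forall>y\<in>W. \<forall>z\<in>W. dist y z \<le> \<delta>"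
    using exists_fine_open_cover[OF assms(3)] by blast
  have "sep_growth_rate K \<delta> \<le> cover_growth_rate K \<U> + ereal 0"
    unfolding sep_growth_rate_def cover_growth_rate_def
  proof (rule limsup_ln_rate_le)
    fix n :: nat assume "1 \<le> n"
    then show "0 < sep_pressure T f n \<delta> (K n)"
      using assms by (intro sep_pressure_pos) auto
    show "sep_pressure T f n \<delta> (K n) \<le> exp (real n * 0) * cover_pressure X T f n \<U> (K n)"
      using assms \<open>1 \<le> n\<close> by (simp add: sep_pressure_le_cover_pressure[OF \<U>])
  qed
  then show ?thesis
    using \<U>(1) by auto
qed

lemma cover_growth_rate_le_sep_growth_rate:
  assumes K: "\<And>n. 1 \<le> n \<Longrightarrow> K n \<subseteq> X" "\<And>n. 1 \<le> n \<Longrightarrow> K n \<noteq> {}" "\<And>n. 1 \<le> n \<Longrightarrow> closed (K n)"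
    and \<U>: "\<U> \<in> open_covers X" and "0 < \<epsilon>"
  shows "\<exists>\<delta>>0. cover_growth_rate K \<U> \<le> sep_growth_rate K \<delta> + ereal \<epsilon>"
proof -
  have "X \<noteq> {}"
    using K(1,2)[of 1] by auto
  then obtain r where "0 < r" and Lebesgue: "\<And>S. S \<subseteq> X \<Longrightarrow> diameter S < r \<Longrightarrow> \<exists>W\<in>\<U>. S \<subseteq> W"
    using open_cover_Lebesgue_number[OF \<U>] by blast
  have "uniformly_continuous_on X f"
    by (rule compact_uniformly_continuous[OF continuous_f compact_X])
  then obtain d where "0 < d" and d: "\<forall>u\<in>X. \<forall>v\<in>X. dist v u < d \<longrightarrow> dist (f v) (f u) < \<epsilon>"
    unfolding uniformly_continuous_on_def using \<open>0 < \<epsilon>\<close> by blast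
  define \<delta> where "\<delta> = min (r / 3) (d / 2)"
  have "0 < \<delta>" "2 * \<delta> < r"
    using \<open>0 < r\<close> \<open>0 < d\<close> by (auto simp: \<delta>_def)
  have uc: "\<bar>f u - f v\<bar> \<le> \<epsilon>" if "u \<in> X" "v \<in> X" "dist u v \<le> \<delta>" for u v
  proof -
    have "dist v u < d"
      using that(3) \<open>0 < d\<close> by (simp add: \<delta>_def dist_commute)
    then have "dist (f v) (f u) < \<epsilon>"
      using d that(1,2) by blast
    then show ?thesis
      by (simp add: dist_real_def abs_minus_commute)
  qed
  have "cover_growth_rate K \<U> \<le> sep_growth_rate K \<delta> + ereal \<epsilon>"
    unfolding sep_growth_rate_def cover_growth_rate_def
  proof (rule limsup_ln_rate_le)
    fix n :: nat assume "1 \<le> n"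
    then show "0 < cover_pressure X T f n \<U> (K n)"
      using cover_pressure_pos[OF \<U> K(1,2)] by blast
    show "cover_pressure X T f n \<U> (K n) \<le> exp (real n * \<epsilon>) * sep_pressure T f n \<delta> (K n)"
      using \<open>1 \<le> n\<close> by (intro cover_pressure_le_sep_pressure[OF \<U> Lebesgue \<open>0 < \<delta>\<close> \<open>2 * \<delta> < r\<close> uc] K)
  qed
  then show ?thesis
    using \<open>0 < \<delta>\<close> by blast
qed

end

theorem lemma3p1:
  fixes X :: "'a::metric_space set" and T :: "'a \<Rightarrow> 'a" and f :: "'a \<Rightarrow> real"
    and K :: "nat \<Rightarrow> 'a set"
  assumes "compact X"
    and "\<exists>g. homeomorphism X X T g"
    and "continuous_on X f"
    and "\<forall>n\<ge>1. K n \<subseteq> X \<and> closed (K n) \<and> K n \<noteq> {}"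
  shows "((\<lambda>\<delta>. limsup (\<lambda>n. ereal (ln (sep_pressure T f n \<delta> (K n)) / real n)))
          \<longlongrightarrow> (SUP \<U>\<in>open_covers X.
                 limsup (\<lambda>n. ereal (ln (cover_pressure X T f n \<U> (K n)) / real n))))
         (at_right 0)"
proof -
  obtain g where "homeomorphism X X T g"
    using assms(2) by blast
  then interpret tds X T f
    using assms(1,3) by unfold_locales (auto simp: homeomorphism_def)
  have K: "\<And>n. 1 \<le> n \<Longrightarrow> K n \<subseteq> X" "\<And>n. 1 \<le> n \<Longrightarrow> K n \<noteq> {}" "\<And>n. 1 \<le> n \<Longrightarrow> closed (K n)"
    using assms(4) by auto
  have "(SUP \<delta>\<in>{0<..}. sep_growth_rate K \<delta>) = (SUP \<U>\<in>open_covers X. cover_growth_rate K \<U>)"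
    using sep_growth_rate_le_cover_growth_rate[of K, OF K(1,2)]
      cover_growth_rate_le_sep_growth_rate[of K, OF K]
    by (intro SUP_eq_ereal_by_approximation) (auto simp: Bex_def)
  moreover have "(sep_growth_rate K \<longlongrightarrow> (SUP \<delta>\<in>{0<..}. sep_growth_rate K \<delta>)) (at_right 0)"
    using sep_growth_rate_antimono[of K, OF K(1,2)] by (rule antimono_tendsto_at_right_0_SUP)
  ultimately show ?thesis
    unfolding sep_growth_rate_def[abs_def] cover_growth_rate_def by simp
qed

end
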